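(* Let $\Omega$ be a Cantor group with identity $e$ and let $T$ be a minimal translation of $\Omega$. Then for every limit-periodic potential $d\in\ell^\infty(\mathbb{Z})$ with $\mathrm{hull}(d)\cong\Omega$ (as topological groups), there exists $f\in C(\Omega,\mathbb{R})$ such that $f(T^n(e))=d_n$ for every $n\in\mathbb{Z}$.
   Context: A Cantor group is a totally disconnected compact abelian topological group without isolated points. A translation of a topological group $\Omega$ is a map $T(\omega)=\omega\cdot\omega_0$ for some fixed $\omega_0\in\Omega$; it is minimal if $\{T^n(\omega):n\in\mathbb{Z}\}$ is dense in $\Omega$ for every $\omega$. $\sigma$ is the left shift on $\ell^\infty(\mathbb{Z})$ (sup norm), $(\sigma d)_n=d_{n+1}$, and $\mathrm{hull}(d)$ is the closure of $\{\sigma^k d:k\in\mathbb{Z}\}$. A potential is periodic if its shift orbit is finite, and limit-periodic if it lies in the $\ell^\infty$-closure of the periodic potentials. For limit-periodic $d$, $\mathrm{hull}(d)$ is compact and carries a unique topological group structure with identity $d$ such that $k\mapsto\sigma^k(d)$ is a homomorphism $\mathbb{Z}\to\mathrm{hull}(d)$. *)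

theory Defs
  imports "HOL-Analysis.Analysis"
begin

(* l^infty(Z) is modelled by the type  int \<Rightarrow>\<^sub>C real  of bounded (continuous) functions
   on the discrete space Z, with the sup norm. *)

definition shift_int :: "int \<Rightarrow> (int \<Rightarrow>\<^sub>C real) \<Rightarrow> (int \<Rightarrow>\<^sub>C real)" where
  "shift_int k d = Bcontfun (\<lambda>n. apply_bcontfun d (n + k))"

definition shift :: "(int \<Rightarrow>\<^sub>C real) \<Rightarrow> (int \<Rightarrow>\<^sub>C real)" where
  "shift d = shift_int 1 d"

definition shift_hull :: "(int \<Rightarrow>\<^sub>C real) \<Rightarrow> (int \<Rightarrow>\<^sub>C real) set" where
  "shift_hull d = closure (range (\<lambda>k. shift_int k d))"

definition periodic_pot :: "(int \<Rightarrow>\<^sub>C real) \<Rightarrow> bool" where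
  "periodic_pot d \<longleftrightarrow> finite (range (\<lambda>k. shift_int k d))"

definition limit_periodic :: "(int \<Rightarrow>\<^sub>C real) \<Rightarrow> bool" where
  "limit_periodic d \<longleftrightarrow> d \<in> closure {p. periodic_pot p}"

definition totally_disconnected :: "'a::topological_space set \<Rightarrow> bool" where
  "totally_disconnected S \<longleftrightarrow> (\<forall>C. C \<subseteq> S \<and> connected C \<longrightarrow> (\<forall>x\<in>C. \<forall>y\<in>C. x = y))"

definition cantor_group :: "'a::{topological_ab_group_add, t2_space} itself \<Rightarrow> bool" where
  "cantor_group _ \<longleftrightarrow> compact (UNIV :: 'a set) \<and> totally_disconnected (UNIV :: 'a set)
      \<and> (\<forall>x::'a. x islimpt UNIV)"

definition iter_int :: "('a \<Rightarrow> 'a) \<Rightarrow> int \<Rightarrow> 'a \<Rightarrow> 'a" where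
  "iter_int T n = (if n \<ge> 0 then T ^^ nat n else (inv T) ^^ nat (- n))"

definition translation :: "'a::group_add \<Rightarrow> 'a \<Rightarrow> 'a" where
  "translation \<omega>0 = (\<lambda>\<omega>. \<omega> + \<omega>0)"

definition minimal :: "('a::topological_space \<Rightarrow> 'a) \<Rightarrow> bool" where
  "minimal T \<longleftrightarrow> (\<forall>\<omega>. closure {iter_int T n \<omega> | n. True} = UNIV)"

definition topgroup_on :: "'b::topological_space set \<Rightarrow> ('b \<Rightarrow> 'b \<Rightarrow> 'b) \<Rightarrow> ('b \<Rightarrow> 'b) \<Rightarrow> 'b \<Rightarrow> bool" where
  "topgroup_on H gmul iv e \<longleftrightarrow>
     e \<in> H \<and>
     (\<forall>x\<in>H. \<forall>y\<in>H. gmul x y \<in> H) \<and> (\<forall>x\<in>H. iv x \<in> H) \<and>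
     (\<forall>x\<in>H. \<forall>y\<in>H. \<forall>z\<in>H. gmul (gmul x y) z = gmul x (gmul y z)) \<and>
     (\<forall>x\<in>H. gmul e x = x \<and> gmul x e = x) \<and>
     (\<forall>x\<in>H. gmul (iv x) x = e \<and> gmul x (iv x) = e) \<and>
     continuous_on (H \<times> H) (\<lambda>(x, y). gmul x y) \<and> continuous_on H iv"

(* The group structure on hull(d) used in the paper: a topological group structure with
   identity d for which k \<mapsto> sigma^k d is a homomorphism Z \<rightarrow> hull(d)
   (unique for limit-periodic d). *)
definition hull_group :: "(int \<Rightarrow>\<^sub>C real) \<Rightarrow> ((int \<Rightarrow>\<^sub>C real) \<Rightarrow> (int \<Rightarrow>\<^sub>C real) \<Rightarrow> (int \<Rightarrow>\<^sub>C real))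
      \<Rightarrow> ((int \<Rightarrow>\<^sub>C real) \<Rightarrow> (int \<Rightarrow>\<^sub>C real)) \<Rightarrow> bool" where
  "hull_group d gmul iv \<longleftrightarrow> topgroup_on (shift_hull d) gmul iv d \<and>
     (\<forall>j k. gmul (shift_int j d) (shift_int k d) = shift_int (j + k) d)"

definition hull_iso :: "(int \<Rightarrow>\<^sub>C real) \<Rightarrow> 'a::topological_ab_group_add itself \<Rightarrow> bool" where
  "hull_iso d _ \<longleftrightarrow> (\<exists>(\<phi>::'a \<Rightarrow> (int \<Rightarrow>\<^sub>C real)) gmul iv.
      hull_group d gmul iv \<and> homeomorphism UNIV (shift_hull d) \<phi> (inv \<phi>) \<and>
      (\<forall>x y. \<phi> (x + y) = gmul (\<phi> x) (\<phi> y)))"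

end

theory Submission
  imports Defs
begin

text \<open>Let \<alpha> n = T^n(e) = n \<omega>0 and let \<beta> j be the point of \<Omega> corresponding to \<sigma>^j d;
  both are homomorphisms \<int> \<rightarrow> \<Omega> with dense range. If d is within e/2 of a q-periodic potential,
  the closure U of \<beta>(q\<int>) is a closed subgroup whose finitely many cosets \<beta> r + U (0 \<le> r < q)
  cover \<Omega>, so U is open; and U is mapped into the e-ball around d. As \<alpha> has dense range,
  \<alpha> n \<in> U forces \<beta> n \<in> U, hence \<parallel>\<sigma>^n d - d\<parallel> \<le> e. So n \<mapsto> d_n is uniformly continuous
  with respect to the group structure on \<alpha>(\<int>), and by compactness of \<Omega> (measured through the
  metric of hull(d)) it extends continuously to \<Omega>.\<close>

lemma apply_shift_int [simp]: "apply_bcontfun (shift_int k d) n = apply_bcontfun d (n + k)"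
proof -
  have "range (\<lambda>n. apply_bcontfun d (n + k)) \<subseteq> range (apply_bcontfun d)"
    by auto
  then have "(\<lambda>n. apply_bcontfun d (n + k)) \<in> bcontfun"
    using bounded_subset bounded_apply_bcontfun by (auto simp: bcontfun_def)
  then show ?thesis
    by (simp add: shift_int_def Bcontfun_inverse)
qed

lemma shift_int_shift_int: "shift_int a (shift_int b d) = shift_int (a + b) d"
  by (rule bcontfun_eqI) (simp add: ac_simps)

lemma shift_int_0 [simp]: "shift_int 0 d = d"
  by (rule bcontfun_eqI) simp

lemma dist_shift_int_le: "dist (shift_int k x) (shift_int k y) \<le> dist x y"
  by (rule dist_bound) (simp add: dist_bounded)

lemma dist_apply_shift_int_le: "dist (apply_bcontfun d (m + n)) (apply_bcontfun d m) \<le> dist (shift_int n d) d"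
  using dist_bounded[of "shift_int n d" m d] by simp

lemma shift_int_in_shift_hull: "shift_int k d \<in> shift_hull d"
  unfolding shift_hull_def by (rule closure_subset[THEN subsetD]) (rule rangeI)

lemma periodic_potE:
  assumes "periodic_pot p"
  obtains q where "q > 0" "shift_int q p = p"
proof -
  have "\<not> inj (\<lambda>k. shift_int k p)"
    using assms finite_imageD[of "\<lambda>k. shift_int k p" UNIV] infinite_UNIV_int
    by (auto simp: periodic_pot_def)
  then obtain i j where "i < j" "shift_int i p = shift_int j p"
    unfolding inj_def by (metis linorder_neq_iff)
  then have "shift_int (- i) (shift_int j p) = p"
    by (metis add.left_inverse shift_int_0 shift_int_shift_int)
  then show ?thesis
    using \<open>i < j\<close> that[of "j - i"] by (simp add: shift_int_shift_int)
qed

lemma shift_int_mult_period: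
  assumes "shift_int q p = p"
  shows "shift_int (q * k) p = p"
proof (induction k rule: int_induct[where k = 0])
  case base
  then show ?case by simp
next
  case (step1 i)
  then show ?case
    using assms by (metis distrib_left mult.right_neutral shift_int_shift_int)
next
  case (step2 i)
  have "shift_int (q * (i - 1)) p = shift_int (q * (i - 1)) (shift_int q p)"
    using assms by simp
  also have "\<dots> = shift_int (q * i) p"
    by (simp add: shift_int_shift_int algebra_simps)
  finally show ?case
    using step2 by simp
qed

lemma limit_periodic_almost_period:
  assumes "limit_periodic d" "e > 0"
  obtains q where "q > 0" "\<And>k. dist (shift_int (q * k) d) d < e"
proof -
  obtain p where "periodic_pot p" and dp: "dist p d < e / 2"
    using assms unfolding limit_periodic_def closure_approachable by (metis half_gt_zero mem_Collect_eq)
  then obtain q where "q > 0" and q: "shift_int q p = p"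
    by (blast elim: periodic_potE)
  have "dist (shift_int (q * k) d) d < e" for k
  proof -
    have "dist (shift_int (q * k) d) d
        \<le> dist (shift_int (q * k) d) (shift_int (q * k) p) + dist (shift_int (q * k) p) d"
      by (rule dist_triangle)
    also have "\<dots> \<le> dist d p + dist p d"
      using dist_shift_int_le[of "q * k" d p] shift_int_mult_period[OF q] by simp
    finally show ?thesis
      using dp by (simp add: dist_commute)
  qed
  with \<open>q > 0\<close> that show ?thesis by blast
qed

definition add_subgroup :: "'a::ab_group_add set \<Rightarrow> bool" where
  "add_subgroup U \<longleftrightarrow> 0 \<in> U \<and> (\<forall>x\<in>U. \<forall>y\<in>U. x - y \<in> U)"

lemma add_subgroup_diff: "add_subgroup U \<Longrightarrow> x \<in> U \<Longrightarrow> y \<in> U \<Longrightarrow> x - y \<in> U"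
  unfolding add_subgroup_def by blast

lemma add_subgroup_add:
  assumes "add_subgroup U" "x \<in> U" "y \<in> U"
  shows "x + y \<in> U"
proof -
  have "0 - y \<in> U"
    using assms add_subgroup_diff[of U 0 y] by (simp add: add_subgroup_def)
  then have "x - (0 - y) \<in> U"
    using assms add_subgroup_diff by blast
  then show ?thesis by simp
qed

text \<open>With HOL-Analysis loaded, plain \<open>additive\<close> denotes the measure-theoretic notion, so
  homomorphisms of abelian groups are written \<open>Modules.additive\<close>.\<close>

lemma add_subgroup_range_additive:
  assumes "Modules.additive h"
  shows "add_subgroup (range h)"
  unfolding add_subgroup_def
proof (intro conjI ballI)
  show "0 \<in> range h"
    using additive.zero[OF assms] by (metis rangeI)
  fix x y assume "x \<in> range h" "y \<in> range h"
  then obtain a b where "x = h a" "y = h b" by blast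
  then have "x - y = h (a - b)"
    by (simp add: additive.diff[OF assms])
  then show "x - y \<in> range h" by simp
qed

lemma additive_int_in_add_subgroup:
  fixes h :: "int \<Rightarrow> 'a::ab_group_add"
  assumes U: "add_subgroup U" and h: "Modules.additive h" "h 1 \<in> U"
  shows "h k \<in> U"
proof (induction k rule: int_induct[where k = 0])
  case base
  then show ?case using U additive.zero[OF h(1)] by (simp add: add_subgroup_def)
next
  case (step1 i)
  then show ?case using add_subgroup_add[OF U] h by (simp add: additive.add)
next
  case (step2 i)
  then show ?case using add_subgroup_diff[OF U] h by (simp add: additive.diff)
qed

lemma additive_intI:
  fixes h :: "int \<Rightarrow> 'a::ab_group_add"
  assumes "h 0 = 0" "\<And>n. h (n + 1) = h n + c"
  shows "Modules.additive h"
proof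
  fix a b :: int
  show "h (a + b) = h a + h b"
  proof (induction b rule: int_induct[where k = 0])
    case base
    then show ?case using assms(1) by simp
  next
    case (step1 i)
    then show ?case using assms(2)[of "a + i"] assms(2)[of i] by (simp add: algebra_simps)
  next
    case (step2 i)
    then show ?case using assms(2)[of "a + i - 1"] assms(2)[of "i - 1"] by (simp add: algebra_simps)
  qed
qed

lemma closed_coset: "closed U \<Longrightarrow> closed {x::'a::topological_ab_group_add. x - c \<in> U}"
  using closed_vimage[of U "\<lambda>x. x - c"] by (simp add: vimage_def continuous_on_diff continuous_on_id continuous_on_const)

lemma open_coset: "open U \<Longrightarrow> open {x::'a::topological_ab_group_add. x - c \<in> U}"
  using open_vimage[of U "\<lambda>x. x - c"] by (simp add: vimage_def continuous_on_diff continuous_on_id continuous_on_const)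

lemma add_subgroup_closure:
  fixes A :: "'a::topological_ab_group_add set"
  assumes A: "add_subgroup A"
  shows "add_subgroup (closure A)"
proof -
  have "(\<lambda>z. fst z - snd z) ` (A \<times> A) \<subseteq> closure A"
  proof (rule image_subsetI)
    fix z assume "z \<in> A \<times> A"
    then have "fst z - snd z \<in> A"
      using add_subgroup_diff[OF A] by (auto simp: mem_Times_iff)
    then show "fst z - snd z \<in> closure A"
      using closure_subset by blast
  qed
  moreover have "continuous_on (closure (A \<times> A)) (\<lambda>z. fst z - snd z)"
    by (intro continuous_on_diff continuous_on_fst continuous_on_snd continuous_on_id)
  ultimately have "(\<lambda>z. fst z - snd z) ` closure (A \<times> A) \<subseteq> closure A"
    by (intro image_closure_subset) simp_all
  then have "x - y \<in> closure A" if "x \<in> closure A" "y \<in> closure A" for x y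
  proof -
    have "(x, y) \<in> closure (A \<times> A)"
      using that by (simp add: closure_Times)
    with \<open>(\<lambda>z. fst z - snd z) ` closure (A \<times> A) \<subseteq> closure A\<close> show ?thesis
      by (metis (no_types, lifting) fst_conv snd_conv image_subset_iff)
  qed
  moreover have "0 \<in> closure A"
    using A closure_subset by (auto simp: add_subgroup_def)
  ultimately show ?thesis
    unfolding add_subgroup_def by blast
qed

lemma open_add_subgroup_finite_index:
  fixes U :: "'a::topological_ab_group_add set"
  assumes U: "add_subgroup U" "closed U" and "finite C" and cover: "\<And>x. \<exists>c\<in>C. x - c \<in> U"
  shows "open U"
proof -
  have "- U = (\<Union>c\<in>{c\<in>C. c \<notin> U}. {x. x - c \<in> U})"
  proof (intro equalityI subsetI)
    fix x assume "x \<in> - U"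
    moreover obtain c where "c \<in> C" "x - c \<in> U"
      using cover by blast
    moreover have "c \<notin> U"
    proof
      assume "c \<in> U"
      then have "(x - c) + c \<in> U"
        using add_subgroup_add[OF U(1) \<open>x - c \<in> U\<close>] by blast
      with \<open>x \<in> - U\<close> show False
        by simp
    qed
    ultimately show "x \<in> (\<Union>c\<in>{c\<in>C. c \<notin> U}. {x. x - c \<in> U})"
      by blast
  next
    fix x assume "x \<in> (\<Union>c\<in>{c\<in>C. c \<notin> U}. {x. x - c \<in> U})"
    then obtain c where "c \<notin> U" "x - c \<in> U" by blast
    then show "x \<in> - U"
      using add_subgroup_diff[OF U(1), of x "x - c"] by auto
  qed
  moreover have "closed (\<Union>c\<in>{c\<in>C. c \<notin> U}. {x. x - c \<in> U})"
    using \<open>finite C\<close> closed_coset[OF U(2)] by (intro closed_UN) auto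
  ultimately show ?thesis
    by (metis closed_open double_complement)
qed

lemma additive_comp_mult:
  fixes h :: "int \<Rightarrow> 'a::ab_group_add"
  assumes "Modules.additive h"
  shows "Modules.additive (\<lambda>k. h (q * k))"
  by unfold_locales (simp add: distrib_left additive.add[OF assms])

lemma open_closure_multiples:
  fixes \<beta> :: "int \<Rightarrow> 'a::topological_ab_group_add"
  assumes \<beta>: "Modules.additive \<beta>" "closure (range \<beta>) = UNIV" and "q > 0"
  shows "open (closure (range (\<lambda>k. \<beta> (q * k))))" (is "open ?U")
proof -
  have U: "add_subgroup ?U"
    by (intro add_subgroup_closure add_subgroup_range_additive additive_comp_mult \<beta>(1))
  let ?V = "\<Union>r\<in>{0..<q}. {x. x - \<beta> r \<in> ?U}"
  have "range \<beta> \<subseteq> ?V"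
  proof
    fix x assume "x \<in> range \<beta>"
    then obtain j where x: "x = \<beta> j" by blast
    have "x - \<beta> (j mod q) = \<beta> (q * (j div q))"
      unfolding x additive.diff[OF \<beta>(1), symmetric] by (simp add: minus_mod_eq_mult_div)
    then have "x - \<beta> (j mod q) \<in> ?U"
      using closure_subset by (metis rangeI subsetD)
    moreover have "j mod q \<in> {0..<q}"
      using \<open>q > 0\<close> by simp
    ultimately show "x \<in> ?V" by blast
  qed
  moreover have "closed ?V"
    by (intro closed_UN ballI closed_coset closed_closure finite_atLeastLessThan_int)
  ultimately have "UNIV \<subseteq> ?V"
    using closure_minimal \<beta>(2) by metis
  then have "\<exists>c\<in>\<beta> ` {0..<q}. x - c \<in> ?U" for x
    by blast
  then show ?thesis
    using open_add_subgroup_finite_index[OF U closed_closure] by blast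
qed

text \<open>The open coset \<beta> 1 + U contains some \<alpha> s; modulo U, \<beta> then agrees with k \<mapsto> \<alpha> (k s).\<close>

lemma open_add_subgroup_transfer:
  fixes \<alpha> \<beta> :: "int \<Rightarrow> 'a::topological_ab_group_add"
  assumes U: "add_subgroup U" "open U"
    and \<alpha>: "Modules.additive \<alpha>" "closure (range \<alpha>) = UNIV" and \<beta>: "Modules.additive \<beta>"
    and "\<alpha> n \<in> U"
  shows "\<beta> n \<in> U"
proof -
  have "\<beta> 1 \<in> {x. x - \<beta> 1 \<in> U} \<inter> closure (range \<alpha>)"
    using U(1) \<alpha>(2) by (simp add: add_subgroup_def)
  then obtain s where s: "\<alpha> s - \<beta> 1 \<in> U"
    using open_Int_closure_eq_empty[OF open_coset[OF U(2)]] by blast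
  have "\<alpha> (n * s) \<in> U"
    using additive_int_in_add_subgroup[OF U(1) additive_comp_mult[OF \<alpha>(1), of n]] \<open>\<alpha> n \<in> U\<close>
    by simp
  moreover have "Modules.additive (\<lambda>k. \<alpha> (k * s) - \<beta> k)"
    using \<alpha>(1) \<beta> by unfold_locales (simp add: distrib_right additive.add)
  then have "\<alpha> (n * s) - \<beta> n \<in> U"
    using additive_int_in_add_subgroup[OF U(1), of "\<lambda>k. \<alpha> (k * s) - \<beta> k"] s by simp
  ultimately have "\<alpha> (n * s) - (\<alpha> (n * s) - \<beta> n) \<in> U"
    by (rule add_subgroup_diff[OF U(1)])
  then show ?thesis
    by simp
qed

lemma limit_periodic_return_nbhd:
  fixes \<alpha> \<beta> :: "int \<Rightarrow> 'a::topological_ab_group_add" and \<phi> :: "'a \<Rightarrow> (int \<Rightarrow>\<^sub>C real)"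
  assumes "limit_periodic d" "e > 0"
    and \<alpha>: "Modules.additive \<alpha>" "closure (range \<alpha>) = UNIV"
    and \<beta>: "Modules.additive \<beta>" "closure (range \<beta>) = UNIV"
    and \<phi>: "continuous_on UNIV \<phi>" "\<And>j. \<phi> (\<beta> j) = shift_int j d"
  obtains U where "open U" "0 \<in> U" "\<And>n. \<alpha> n \<in> U \<Longrightarrow> dist (shift_int n d) d \<le> e"
proof -
  obtain q where "q > 0" and q: "\<And>k. dist (shift_int (q * k) d) d < e"
    using limit_periodic_almost_period[OF assms(1,2)] by blast
  define U where "U = closure (range (\<lambda>k. \<beta> (q * k)))"
  have U: "add_subgroup U" "open U"
    unfolding U_def using open_closure_multiples[OF \<beta> \<open>q > 0\<close>]
    by (simp_all add: add_subgroup_closure add_subgroup_range_additive additive_comp_mult[OF \<beta>(1)])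
  have "\<phi> ` range (\<lambda>k. \<beta> (q * k)) \<subseteq> cball d e"
    using q \<phi>(2) by (auto simp: dist_commute less_imp_le)
  then have image_U: "\<phi> ` U \<subseteq> cball d e"
    unfolding U_def
    by (intro image_closure_subset continuous_on_subset[OF \<phi>(1)]) simp_all
  have "dist (shift_int n d) d \<le> e" if "\<alpha> n \<in> U" for n
  proof -
    have "\<beta> n \<in> U"
      using open_add_subgroup_transfer[OF U \<alpha> \<beta>(1) that] .
    then have "shift_int n d \<in> cball d e"
      using image_U \<phi>(2) by (metis image_subset_iff)
    then show ?thesis
      by (simp add: dist_commute)
  qed
  moreover have "0 \<in> U"
    using U(1) by (simp add: add_subgroup_def)
  ultimately show ?thesis
    using that U(2) by blast
qed

lemma compact_group_uniform_nbhd: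
  fixes \<phi> :: "'a::topological_ab_group_add \<Rightarrow> 'm::metric_space"
  assumes "compact (UNIV :: 'a set)" and hom: "homeomorphism UNIV H \<phi> \<psi>"
    and "open U" "0 \<in> U"
  obtains \<delta> where "\<delta> > 0" "\<And>x y. dist (\<phi> x) (\<phi> y) < \<delta> \<Longrightarrow> x - y \<in> U"
proof -
  have \<psi>\<phi>: "\<And>x. \<psi> (\<phi> x) = x" and \<phi>_image: "\<phi> ` UNIV = H" and \<phi>: "continuous_on UNIV \<phi>"
    and \<psi>: "continuous_on H \<psi>"
    using hom unfolding homeomorphism_def by auto
  have "compact H"
    using compact_continuous_image[OF \<phi> assms(1)] \<phi>_image by simp
  define D where "D = (\<lambda>z. \<phi> (\<psi> (fst z) - \<psi> (snd z)))"
  have "continuous_on (H \<times> H) (\<lambda>z. \<psi> (fst z))" "continuous_on (H \<times> H) (\<lambda>z. \<psi> (snd z))"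
    by (auto intro!: continuous_on_compose2[OF \<psi>] continuous_on_fst continuous_on_snd continuous_on_id)
  then have "continuous_on (H \<times> H) D"
    unfolding D_def by (intro continuous_on_compose2[OF \<phi> _ subset_UNIV] continuous_on_diff)
  then have D: "uniformly_continuous_on (H \<times> H) D"
    using compact_uniformly_continuous compact_Times \<open>compact H\<close> by blast
  obtain A where A: "open A" "A \<inter> H = \<psi> -` U \<inter> H"
    using \<psi> \<open>open U\<close> unfolding continuous_on_open_invariant by blast
  have "\<phi> 0 \<in> A"
    using A(2) \<open>0 \<in> U\<close> \<psi>\<phi> \<phi>_image by blast
  then obtain r where "r > 0" and r: "ball (\<phi> 0) r \<subseteq> A"
    using A(1) open_contains_ball by blast
  obtain \<delta> where "\<delta> > 0"
    and \<delta>: "\<And>z z'. z \<in> H \<times> H \<Longrightarrow> z' \<in> H \<times> H \<Longrightarrow> dist z' z < \<delta> \<Longrightarrow> dist (D z') (D z) < r"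
    using D \<open>r > 0\<close> unfolding uniformly_continuous_on_def by metis
  have "x - y \<in> U" if "dist (\<phi> x) (\<phi> y) < \<delta>" for x y
  proof -
    have "dist (\<phi> x, \<phi> y) (\<phi> y, \<phi> y) < \<delta>"
      using that by (simp add: dist_Pair_Pair)
    then have "dist (\<phi> (x - y)) (\<phi> 0) < r"
      using \<delta> \<phi>_image by (force simp: D_def \<psi>\<phi>)
    then have "\<phi> (x - y) \<in> A \<inter> H"
      using r \<phi>_image by (auto simp: dist_commute)
    then show ?thesis
      using A(2) \<psi>\<phi> by auto
  qed
  with \<open>\<delta> > 0\<close> that show ?thesis by blast
qed

lemma uniform_sequence_extends_to_closure:
  fixes \<gamma> :: "'i \<Rightarrow> 'm::metric_space" and v :: "'i \<Rightarrow> 'b::complete_space"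
  assumes uniform: "\<And>e. e > 0 \<Longrightarrow> \<exists>\<delta>>0. \<forall>m n. dist (\<gamma> m) (\<gamma> n) < \<delta> \<longrightarrow> dist (v m) (v n) \<le> e"
  obtains G where "continuous_on (closure (range \<gamma>)) G" "\<And>n. G (\<gamma> n) = v n"
proof -
  have v_eq: "v m = v n" if "\<gamma> m = \<gamma> n" for m n
  proof -
    have "dist (v m) (v n) \<le> 0 + e" if e: "e > 0" for e
    proof -
      obtain \<delta> where "\<delta> > 0" "\<forall>m n. dist (\<gamma> m) (\<gamma> n) < \<delta> \<longrightarrow> dist (v m) (v n) \<le> e"
        using uniform[OF e] by blast
      then show ?thesis
        using \<open>\<gamma> m = \<gamma> n\<close> by simp
    qed
    then have "dist (v m) (v n) \<le> 0"
      by (rule field_le_epsilon)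
    then show ?thesis
      by simp
  qed
  define g where "g y = v (SOME n. y = \<gamma> n)" for y
  have g: "g (\<gamma> n) = v n" for n
    unfolding g_def by (rule v_eq[symmetric], rule someI, rule refl)
  have "uniformly_continuous_on (range \<gamma>) g"
    unfolding uniformly_continuous_on_def
  proof (intro allI impI)
    fix e :: real assume "e > 0"
    then obtain \<delta> where "\<delta> > 0" and \<delta>: "\<forall>m n. dist (\<gamma> m) (\<gamma> n) < \<delta> \<longrightarrow> dist (v m) (v n) \<le> e / 2"
      using uniform[of "e / 2"] by auto
    have "dist (g x') (g x) < e" if "x \<in> range \<gamma>" "x' \<in> range \<gamma>" and close: "dist x' x < \<delta>" for x x'
    proof -
      obtain m n where "x = \<gamma> m" "x' = \<gamma> n"
        using \<open>x \<in> range \<gamma>\<close> \<open>x' \<in> range \<gamma>\<close> by blast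
      then have "dist (g x') (g x) \<le> e / 2"
        using \<delta> close by (simp add: g)
      with \<open>e > 0\<close> show ?thesis
        by simp
    qed
    with \<open>\<delta> > 0\<close> show "\<exists>\<delta>>0. \<forall>x\<in>range \<gamma>. \<forall>x'\<in>range \<gamma>. dist x' x < \<delta> \<longrightarrow> dist (g x') (g x) < e"
      by blast
  qed
  then obtain G where G: "uniformly_continuous_on (closure (range \<gamma>)) G"
    and g_G: "\<And>y. y \<in> range \<gamma> \<Longrightarrow> g y = G y"
    using uniformly_continuous_on_extension_on_closure[of "range \<gamma>" g] by metis
  show ?thesis
  proof (rule that)
    show "continuous_on (closure (range \<gamma>)) G"
      using G by (rule uniformly_continuous_imp_continuous)
    show "G (\<gamma> n) = v n" for n
      using g_G[of "\<gamma> n"] g by simp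
  qed
qed

lemma dense_additive_continuous_extension:
  fixes \<alpha> :: "int \<Rightarrow> 'a::topological_ab_group_add" and \<phi> :: "'a \<Rightarrow> 'm::metric_space"
    and v :: "int \<Rightarrow> 'b::complete_space"
  assumes "compact (UNIV :: 'a set)" and hom: "homeomorphism UNIV H \<phi> \<psi>"
    and \<alpha>: "Modules.additive \<alpha>" "closure (range \<alpha>) = UNIV"
    and uniform: "\<And>e. e > 0 \<Longrightarrow> \<exists>U. open U \<and> 0 \<in> U \<and> (\<forall>n. \<alpha> n \<in> U \<longrightarrow> (\<forall>m. dist (v (m + n)) (v m) \<le> e))"
  obtains f where "continuous_on UNIV f" "\<And>n. f (\<alpha> n) = v n"
proof -
  have \<phi>: "continuous_on UNIV \<phi>"
    using hom by (simp add: homeomorphism_def)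
  have uniform_\<phi>\<alpha>: "\<exists>\<delta>>0. \<forall>m n. dist (\<phi> (\<alpha> m)) (\<phi> (\<alpha> n)) < \<delta> \<longrightarrow> dist (v m) (v n) \<le> e" if e: "e > 0" for e
  proof -
    obtain U where U: "open U" "0 \<in> U" "\<And>n m. \<alpha> n \<in> U \<Longrightarrow> dist (v (m + n)) (v m) \<le> e"
      using uniform[OF e] by blast
    obtain \<delta> where "\<delta> > 0" and \<delta>: "\<And>x y. dist (\<phi> x) (\<phi> y) < \<delta> \<Longrightarrow> x - y \<in> U"
      using compact_group_uniform_nbhd[OF assms(1) hom U(1,2)] by blast
    have "dist (v m) (v n) \<le> e" if "dist (\<phi> (\<alpha> m)) (\<phi> (\<alpha> n)) < \<delta>" for m n
    proof -
      have "\<alpha> (m - n) \<in> U"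
        using \<delta>[OF that] by (simp add: additive.diff[OF \<alpha>(1)])
      then show ?thesis
        using U(3)[of "m - n" n] by simp
    qed
    with \<open>\<delta> > 0\<close> show ?thesis by blast
  qed
  obtain G where G: "continuous_on (closure (range (\<lambda>n. \<phi> (\<alpha> n)))) G" "\<And>n. G (\<phi> (\<alpha> n)) = v n"
    using uniform_sequence_extends_to_closure[OF uniform_\<phi>\<alpha>] by metis
  have "\<phi> ` closure (range \<alpha>) \<subseteq> closure (\<phi> ` range \<alpha>)"
    by (rule image_closure_subset[OF continuous_on_subset[OF \<phi> subset_UNIV] closed_closure closure_subset])
  then have "range \<phi> \<subseteq> closure (range (\<lambda>n. \<phi> (\<alpha> n)))"
    using \<alpha>(2) by (simp add: image_image)
  then have "continuous_on UNIV (\<lambda>x. G (\<phi> x))"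
    by (rule continuous_on_compose2[OF G(1) \<phi>])
  with G(2) that show ?thesis by blast
qed

lemma inv_translation: "inv (translation c) = translation (- c)"
  by (rule inv_equality) (simp_all add: translation_def)

lemma iter_int_translation_succ:
  fixes c :: "'a::ab_group_add"
  shows "iter_int (translation c) (n + 1) x = iter_int (translation c) n x + c"
proof (cases n rule: int_cases)
  case (nonneg m)
  then have "nat (n + 1) = Suc m" "nat n = m"
    by simp_all
  with nonneg show ?thesis
    by (simp add: iter_int_def translation_def)
next
  case (neg k)
  show ?thesis
  proof (cases k)
    case 0
    with neg show ?thesis
      unfolding iter_int_def inv_translation by (simp add: translation_def)
  next
    case (Suc j)
    with neg have "nat (- (n + 1)) = k" "nat (- n) = Suc k" "\<not> n + 1 \<ge> 0" "\<not> n \<ge> 0"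
      by auto
    then show ?thesis
      unfolding iter_int_def inv_translation by (simp add: translation_def)
  qed
qed

lemma additive_iter_int_translation:
  fixes c :: "'a::ab_group_add"
  shows "Modules.additive (\<lambda>n. iter_int (translation c) n 0)"
proof (rule additive_intI)
  show "iter_int (translation c) 0 0 = 0"
    by (simp add: iter_int_def)
  show "iter_int (translation c) (n + 1) 0 = iter_int (translation c) n 0 + c" for n
    by (rule iter_int_translation_succ)
qed

lemma hull_isoE:
  assumes "hull_iso d TYPE('a)"
  obtains \<phi> :: "'a::topological_ab_group_add \<Rightarrow> (int \<Rightarrow>\<^sub>C real)" and \<beta>
  where "homeomorphism UNIV (shift_hull d) \<phi> (inv \<phi>)" "Modules.additive \<beta>"
    "closure (range \<beta>) = UNIV" "\<And>j. \<phi> (\<beta> j) = shift_int j d"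
proof -
  obtain \<phi> :: "'a \<Rightarrow> (int \<Rightarrow>\<^sub>C real)" and gmul iv where "hull_group d gmul iv"
    and hom: "homeomorphism UNIV (shift_hull d) \<phi> (inv \<phi>)"
    and \<phi>_add: "\<And>x y. \<phi> (x + y) = gmul (\<phi> x) (\<phi> y)"
    using assms unfolding hull_iso_def by blast
  then have gmul: "\<And>j k. gmul (shift_int j d) (shift_int k d) = shift_int (j + k) d"
    unfolding hull_group_def by blast
  have \<psi>\<phi>: "\<And>x. inv \<phi> (\<phi> x) = x" and \<phi>\<psi>: "\<And>y. y \<in> shift_hull d \<Longrightarrow> \<phi> (inv \<phi> y) = y"
    and \<psi>: "continuous_on (shift_hull d) (inv \<phi>)" and \<psi>_image: "inv \<phi> ` shift_hull d = UNIV"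
    using hom unfolding homeomorphism_def by auto
  define \<beta> where "\<beta> j = inv \<phi> (shift_int j d)" for j
  have \<phi>\<beta>: "\<phi> (\<beta> j) = shift_int j d" for j
    unfolding \<beta>_def by (rule \<phi>\<psi>[OF shift_int_in_shift_hull])
  have "Modules.additive \<beta>"
  proof
    fix a b
    have "\<phi> (\<beta> a + \<beta> b) = \<phi> (\<beta> (a + b))"
      by (simp add: \<phi>_add \<phi>\<beta> gmul)
    then show "\<beta> (a + b) = \<beta> a + \<beta> b"
      by (metis \<psi>\<phi>)
  qed
  moreover have "inv \<phi> ` range (\<lambda>k. shift_int k d) \<subseteq> closure (range \<beta>)"
    using closure_subset[of "range \<beta>"] by (simp add: \<beta>_def image_image)
  then have "inv \<phi> ` closure (range (\<lambda>k. shift_int k d)) \<subseteq> closure (range \<beta>)"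
    using \<psi> unfolding shift_hull_def by (intro image_closure_subset closed_closure)
  then have "closure (range \<beta>) = UNIV"
    using \<psi>_image unfolding shift_hull_def by blast
  ultimately show ?thesis
    using that hom \<phi>\<beta> by blast
qed

theorem theorem4p5:
  fixes \<omega>0 :: "'a::{topological_ab_group_add, t2_space}"
    and d :: "int \<Rightarrow>\<^sub>C real"
  assumes "cantor_group TYPE('a)"
    and "minimal (translation \<omega>0)"
    and "limit_periodic d"
    and "hull_iso d TYPE('a)"
  shows "\<exists>f :: 'a \<Rightarrow> real. continuous_on UNIV f \<and>
           (\<forall>n::int. f (iter_int (translation \<omega>0) n 0) = apply_bcontfun d n)"
proof -
  obtain \<phi> :: "'a \<Rightarrow> (int \<Rightarrow>\<^sub>C real)" and \<beta> where hom: "homeomorphism UNIV (shift_hull d) \<phi> (inv \<phi>)"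
    and \<beta>: "Modules.additive \<beta>" "closure (range \<beta>) = UNIV" "\<And>j. \<phi> (\<beta> j) = shift_int j d"
    using hull_isoE[OF assms(4)] by blast
  define \<alpha> where "\<alpha> n = iter_int (translation \<omega>0) n 0" for n
  have \<alpha>: "Modules.additive \<alpha>" "closure (range \<alpha>) = UNIV"
    using additive_iter_int_translation assms(2) unfolding \<alpha>_def minimal_def
    by (auto simp: full_SetCompr_eq)
  have compact: "compact (UNIV :: 'a set)"
    using assms(1) by (simp add: cantor_group_def)
  have \<phi>: "continuous_on UNIV \<phi>"
    using hom by (simp add: homeomorphism_def)
  have uniform: "\<exists>U. open U \<and> 0 \<in> U \<and> (\<forall>n. \<alpha> n \<in> U \<longrightarrow> (\<forall>m. dist (d (m + n)) (d m) \<le> e))"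
    if e: "e > 0" for e
  proof -
    obtain U where "open U" "0 \<in> U" and U: "\<And>n. \<alpha> n \<in> U \<Longrightarrow> dist (shift_int n d) d \<le> e"
      using limit_periodic_return_nbhd[OF assms(3) e \<alpha> \<beta>(1,2) \<phi> \<beta>(3)] by blast
    moreover have "dist (d (m + n)) (d m) \<le> e" if "\<alpha> n \<in> U" for m n
      using dist_apply_shift_int_le[of d m n] U[OF that] by linarith
    ultimately show ?thesis
      by blast
  qed
  obtain f where "continuous_on UNIV f" "\<And>n. f (\<alpha> n) = d n"
    using dense_additive_continuous_extension[OF compact hom \<alpha> uniform] by metis
  then show ?thesis
    unfolding \<alpha>_def by blast
qed

end
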